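(* For real $\kappa\ge0$ and $U$ define \begin{align*} A(\kappa,U)&=2(1+\kappa^2)-U(\kappa^2-1),\\ B(\kappa,U)&=\kappa^2U^2+4U+2(1+\kappa^2),\\ C(\kappa,U)&=-\kappa^2U^3+2U^2+(2\kappa^2+6)U. \end{align*} Then $A(\kappa,U)=0$ holds if and only if $\kappa\neq1$ and $U=U_c(\kappa):=\frac{2(\kappa^2+1)}{\kappa^2-1}$, and $A(\kappa,U)=B(\kappa,U)=0$ holds if and only if $$\kappa^2=\kappa_t^2:=\frac{\sqrt{13}-2}{3}\qquad\text{and}\qquad U=U_t:=\frac{2(\kappa_t^2+1)}{\kappa_t^2-1}\ (\approx-6.61).$$ Moreover $C(\kappa_t,U_t)>0$.
   Context: $A,B,C$ are the Landau coefficients (on resonance, $\omega_a=\omega_c=1$) in the expansion $\delta(n)=An+Bn^2+Cn^3+O(n^4)$ of the reduced pump distance to threshold $\delta=4\lambda^2-(1+\kappa^2)$ as a function of the photon number $n=|\alpha|^2$ along superradiant steady states of the mean-field dissipative quantum Rabi model with Kerr nonlinearity $U=2KN/\omega_c$ and cavity decay rate $\kappa$ (in units of $\omega_c$). The point $A=B=0$ is the tricritical point. *)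

theory Defs
  imports Complex_Main
begin

definition coefA :: "real \<Rightarrow> real \<Rightarrow> real" where
  "coefA \<kappa> U = 2 * (1 + \<kappa>^2) - U * (\<kappa>^2 - 1)"

definition coefB :: "real \<Rightarrow> real \<Rightarrow> real" where
  "coefB \<kappa> U = \<kappa>^2 * U^2 + 4 * U + 2 * (1 + \<kappa>^2)"

definition coefC :: "real \<Rightarrow> real \<Rightarrow> real" where
  "coefC \<kappa> U = - (\<kappa>^2 * U^3) + 2 * U^2 + (2 * \<kappa>^2 + 6) * U"

definition Uc :: "real \<Rightarrow> real" where
  "Uc \<kappa> = 2 * (\<kappa>^2 + 1) / (\<kappa>^2 - 1)"

definition kappa_t_sq :: real where
  "kappa_t_sq = (sqrt 13 - 2) / 3"

definition kappa_t :: real where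
  "kappa_t = sqrt kappa_t_sq"

definition U_t :: real where
  "U_t = 2 * (kappa_t_sq + 1) / (kappa_t_sq - 1)"

end

theory Submission
  imports Defs
begin

text \<open>\<open>A\<close> is affine in \<open>U\<close> with slope \<open>1 - \<kappa>\<^sup>2\<close>, so it vanishes exactly at
  \<open>U = U\<^sub>c(\<kappa>)\<close> when \<open>\<kappa> \<noteq> 1\<close>. Clearing denominators,
  \<open>(\<kappa>\<^sup>2 - 1)\<^sup>2 B(\<kappa>, U\<^sub>c(\<kappa>)) = 2 (\<kappa>\<^sup>2 + 1)(3\<kappa>\<^sup>4 + 4\<kappa>\<^sup>2 - 3)\<close>, and \<open>\<kappa>\<^sub>t\<^sup>2\<close> is the unique
  nonnegative root of \<open>3x\<^sup>2 + 4x - 3\<close>. Finally \<open>C = U (6U + 4\<kappa>\<^sup>2 + 8) - U B\<close>, and at the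
  tricritical point both \<open>U\<^sub>t\<close> and \<open>6U\<^sub>t + 4\<kappa>\<^sub>t\<^sup>2 + 8\<close> are negative.\<close>

lemma kappa_t_sq_root: "3 * kappa_t_sq^2 + 4 * kappa_t_sq - 3 = 0"
  unfolding kappa_t_sq_def by (simp add: power2_eq_square field_simps)

lemma kappa_t_sq_bounds: "0 < kappa_t_sq" "kappa_t_sq < 1"
proof -
  have "2 < sqrt (13::real)" by (rule real_less_rsqrt) simp
  moreover have "sqrt (13::real) < 5" by (rule real_less_lsqrt) auto
  ultimately show "0 < kappa_t_sq" "kappa_t_sq < 1"
    unfolding kappa_t_sq_def by auto
qed

lemma kappa_t_squared: "kappa_t^2 = kappa_t_sq"
  unfolding kappa_t_def using kappa_t_sq_bounds by simp

lemma nonneg_root_iff_kappa_t_sq: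
  fixes x :: real
  assumes "0 \<le> x"
  shows "3 * x^2 + 4 * x - 3 = 0 \<longleftrightarrow> x = kappa_t_sq"
proof
  assume "3 * x^2 + 4 * x - 3 = 0"
  then have "(x - kappa_t_sq) * (3 * (x + kappa_t_sq) + 4) = 0"
    using kappa_t_sq_root by (simp add: algebra_simps power2_eq_square)
  moreover have "3 * (x + kappa_t_sq) + 4 > 0"
    using assms kappa_t_sq_bounds by simp
  ultimately show "x = kappa_t_sq" by simp
qed (use kappa_t_sq_root in simp)

lemma coefA_eq_0_iff: "coefA \<kappa> U = 0 \<longleftrightarrow> \<kappa>^2 \<noteq> 1 \<and> U = Uc \<kappa>"
  unfolding coefA_def Uc_def by (cases "\<kappa>^2 = 1") (auto simp: field_simps)

lemma coefB_Uc:
  assumes "\<kappa>^2 \<noteq> 1"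
  shows "(\<kappa>^2 - 1)^2 * coefB \<kappa> (Uc \<kappa>) = 2 * (\<kappa>^2 + 1) * (3 * \<kappa>^4 + 4 * \<kappa>^2 - 3)"
proof -
  have Uc: "Uc \<kappa> * (\<kappa>^2 - 1) = 2 * (\<kappa>^2 + 1)"
    using assms unfolding Uc_def by simp
  have "(\<kappa>^2 - 1)^2 * coefB \<kappa> (Uc \<kappa>)
      = \<kappa>^2 * (Uc \<kappa> * (\<kappa>^2 - 1))^2 + 4 * (Uc \<kappa> * (\<kappa>^2 - 1)) * (\<kappa>^2 - 1)
        + 2 * (1 + \<kappa>^2) * (\<kappa>^2 - 1)^2"
    unfolding coefB_def by (simp add: algebra_simps power2_eq_square)
  also have "\<dots> = 2 * (\<kappa>^2 + 1) * (3 * \<kappa>^4 + 4 * \<kappa>^2 - 3)"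
    unfolding Uc by (simp add: algebra_simps power2_eq_square power4_eq_xxxx)
  finally show ?thesis .
qed

lemma coefB_Uc_eq_0_iff:
  assumes "\<kappa>^2 \<noteq> 1"
  shows "coefB \<kappa> (Uc \<kappa>) = 0 \<longleftrightarrow> 3 * \<kappa>^4 + 4 * \<kappa>^2 - 3 = 0"
proof -
  have "(\<kappa>^2 - 1)^2 \<noteq> 0" using assms by simp
  moreover have "2 * (\<kappa>^2 + 1) \<noteq> 0" by (smt (verit) zero_le_power2)
  ultimately show ?thesis using coefB_Uc [OF assms] by (metis mult_eq_0_iff)
qed

lemma quartic_eq_0_iff_kappa_t_sq:
  fixes \<kappa> :: real
  shows "3 * \<kappa>^4 + 4 * \<kappa>^2 - 3 = 0 \<longleftrightarrow> \<kappa>^2 = kappa_t_sq"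
  using nonneg_root_iff_kappa_t_sq [of "\<kappa>^2"] by simp

lemma Uc_eq_U_t: "\<kappa>^2 = kappa_t_sq \<Longrightarrow> Uc \<kappa> = U_t"
  unfolding Uc_def U_t_def by simp

lemma coefA_coefB_eq_0_iff: "coefA \<kappa> U = 0 \<and> coefB \<kappa> U = 0 \<longleftrightarrow> \<kappa>^2 = kappa_t_sq \<and> U = U_t"
proof -
  have "coefA \<kappa> U = 0 \<and> coefB \<kappa> U = 0 \<longleftrightarrow> \<kappa>^2 \<noteq> 1 \<and> U = Uc \<kappa> \<and> coefB \<kappa> (Uc \<kappa>) = 0"
    by (auto simp: coefA_eq_0_iff)
  also have "\<dots> \<longleftrightarrow> \<kappa>^2 \<noteq> 1 \<and> U = Uc \<kappa> \<and> \<kappa>^2 = kappa_t_sq"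
    using coefB_Uc_eq_0_iff quartic_eq_0_iff_kappa_t_sq by blast
  also have "\<dots> \<longleftrightarrow> \<kappa>^2 = kappa_t_sq \<and> U = U_t"
    using kappa_t_sq_bounds Uc_eq_U_t by auto
  finally show ?thesis .
qed

lemma coefC_eq: "coefC \<kappa> U = U * (6 * U + 4 * \<kappa>^2 + 8) - U * coefB \<kappa> U"
  unfolding coefC_def coefB_def by (simp add: algebra_simps power2_eq_square power3_eq_cube)

lemma U_t_bounds: "U_t < 0" "6 * U_t + 4 * kappa_t_sq + 8 < 0"
proof -
  let ?x = kappa_t_sq
  have "6 * (?x + 1) - (2 * ?x + 4) * (1 - ?x) = 2 * ?x^2 + 8 * ?x + 2"
    by (simp add: algebra_simps power2_eq_square)
  then have "(2 * ?x + 4) * (1 - ?x) < 6 * (?x + 1)"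
    using kappa_t_sq_bounds zero_le_power2 [of ?x] by linarith
  with kappa_t_sq_bounds show "U_t < 0" "6 * U_t + 4 * ?x + 8 < 0"
    unfolding U_t_def by (simp_all add: field_simps)
qed

theorem mainTheorem6:
  shows "(\<forall>\<kappa> U::real. \<kappa> \<ge> 0 \<longrightarrow>
            ((coefA \<kappa> U = 0 \<longleftrightarrow> \<kappa> \<noteq> 1 \<and> U = Uc \<kappa>) \<and>
             (coefA \<kappa> U = 0 \<and> coefB \<kappa> U = 0 \<longleftrightarrow> \<kappa>^2 = kappa_t_sq \<and> U = U_t)))
         \<and> coefC kappa_t U_t > 0"
proof (intro conjI allI impI)
  fix \<kappa> U :: real
  assume "\<kappa> \<ge> 0"
  then have "\<kappa>^2 = 1 \<longleftrightarrow> \<kappa> = 1"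
    using power2_eq_1_iff by fastforce
  then show "coefA \<kappa> U = 0 \<longleftrightarrow> \<kappa> \<noteq> 1 \<and> U = Uc \<kappa>"
    by (simp add: coefA_eq_0_iff)
  show "coefA \<kappa> U = 0 \<and> coefB \<kappa> U = 0 \<longleftrightarrow> \<kappa>^2 = kappa_t_sq \<and> U = U_t"
    by (rule coefA_coefB_eq_0_iff)
next
  have "coefB kappa_t U_t = 0"
    using coefA_coefB_eq_0_iff kappa_t_squared by blast
  then show "coefC kappa_t U_t > 0"
    using U_t_bounds by (simp add: coefC_eq kappa_t_squared mult_neg_neg)
qed

end
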